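(* Let $\mathcal X\subseteq\{0,1\}^n$, $\hat{\pmb c},\pmb d\in\mathbb R^n_{\ge0}$ and let $\Gamma\in\{0,\dots,n\}$. Then any optimal solution of the nominal problem $\min_{\pmb x\in\mathcal X}(\hat{\pmb c}+\pmb d)^t\pmb x$ is also an optimal solution of the balanced regret problem \[\min_{\pmb x\in\mathcal X}\ \max_{\pmb\delta\in\Delta(\Gamma),\,\pmb y\in\mathcal X}\ \min_{\pmb\epsilon\in\Delta(\Gamma')}\ \sum_{i\in[n]}(\hat c_i+d_i\delta_i+d_i\epsilon_i)(x_i-y_i)\] with $\Gamma'=n$.
   Context: $[n]=\{1,\dots,n\}$; for an integer $k\ge0$, $\Delta(k)=\{\pmb\delta\in\{0,1\}^n:\sum_i\delta_i\le k\}$. $\mathcal X$ is the (nonempty) set of feasible solutions of a combinatorial optimization problem, described as the intersection of a polyhedron with $\{0,1\}^n$. *)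

theory Defs
  imports Complex_Main
begin

text \<open>Vectors in R^n are modelled as functions nat => real indexed by [n] = {1..n};
  binary vectors are required to vanish outside [n], so that {0,1}^n is a finite set.\<close>

definition binvecs :: "nat \<Rightarrow> (nat \<Rightarrow> real) set" where
  "binvecs n = {x. (\<forall>i\<in>{1..n}. x i \<in> {0, 1}) \<and> (\<forall>i. i \<notin> {1..n} \<longrightarrow> x i = 0)}"

definition Delta :: "nat \<Rightarrow> nat \<Rightarrow> (nat \<Rightarrow> real) set" where
  "Delta n k = {\<delta> \<in> binvecs n. (\<Sum>i\<in>{1..n}. \<delta> i) \<le> real k}"

definition nominal_obj :: "nat \<Rightarrow> (nat \<Rightarrow> real) \<Rightarrow> (nat \<Rightarrow> real) \<Rightarrow> (nat \<Rightarrow> real) \<Rightarrow> real" where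
  "nominal_obj n c d x = (\<Sum>i\<in>{1..n}. (c i + d i) * x i)"

definition balanced_regret_obj ::
  "nat \<Rightarrow> (nat \<Rightarrow> real) set \<Rightarrow> (nat \<Rightarrow> real) \<Rightarrow> (nat \<Rightarrow> real) \<Rightarrow> nat \<Rightarrow> nat \<Rightarrow> (nat \<Rightarrow> real) \<Rightarrow> real" where
  "balanced_regret_obj n X c d \<Gamma> \<Gamma>' x =
     Max {Min {(\<Sum>i\<in>{1..n}. (c i + d i * \<delta> i + d i * \<epsilon> i) * (x i - y i)) | \<epsilon>. \<epsilon> \<in> Delta n \<Gamma>'}
          | \<delta> y. \<delta> \<in> Delta n \<Gamma> \<and> y \<in> X}"

definition is_optimal :: "(nat \<Rightarrow> real) set \<Rightarrow> ((nat \<Rightarrow> real) \<Rightarrow> real) \<Rightarrow> (nat \<Rightarrow> real) \<Rightarrow> bool" where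
  "is_optimal X f x \<longleftrightarrow> x \<in> X \<and> (\<forall>x'\<in>X. f x \<le> f x')"

end

theory Submission
  imports Defs
begin

text \<open>Evaluating the inner minimum at \<open>\<epsilon> = y\<close> bounds every scenario of the regret by the nominal
  gap \<open>(c + d)\<^sup>T x - (c + d)\<^sup>T y\<close>: coordinatewise, where \<open>x\<^sub>i - y\<^sub>i = 1\<close> the cost
  \<open>c\<^sub>i + d\<^sub>i \<delta>\<^sub>i\<close> is at most \<open>c\<^sub>i + d\<^sub>i\<close>, and where \<open>x\<^sub>i - y\<^sub>i = -1\<close> the cost
  \<open>c\<^sub>i + d\<^sub>i \<delta>\<^sub>i + d\<^sub>i\<close> is at least \<open>c\<^sub>i + d\<^sub>i\<close>. So at a nominal optimum the regret is at most 0,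
  while the scenario \<open>\<delta> = 0, y = x\<close> shows that the regret of every solution is at least 0.\<close>

definition scenario_regret ::
  "nat \<Rightarrow> (nat \<Rightarrow> real) \<Rightarrow> (nat \<Rightarrow> real) \<Rightarrow> (nat \<Rightarrow> real) \<Rightarrow> (nat \<Rightarrow> real)
    \<Rightarrow> (nat \<Rightarrow> real) \<Rightarrow> (nat \<Rightarrow> real) \<Rightarrow> real" where
  "scenario_regret n c d \<delta> \<epsilon> x y = (\<Sum>i\<in>{1..n}. (c i + d i * \<delta> i + d i * \<epsilon> i) * (x i - y i))"

lemma finite_binvecs: "finite (binvecs n)"
proof -
  let ?indicator = "\<lambda>S i. if i \<in> S then (1::real) else 0"
  have "x \<in> ?indicator ` Pow {1..n}" if x: "x \<in> binvecs n" for x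
  proof
    show "x = ?indicator {i. x i = 1}"
    proof
      fix i show "x i = ?indicator {i. x i = 1} i"
        using x unfolding binvecs_def by (cases "i \<in> {1..n}") auto
    qed
    show "{i. x i = 1} \<in> Pow {1..n}"
      using x unfolding binvecs_def by force
  qed
  then show ?thesis
    by (meson finite_Pow_iff finite_atLeastAtMost finite_imageI finite_subset subsetI)
qed

lemma finite_Delta: "finite (Delta n k)"
  unfolding Delta_def using finite_binvecs by simp

lemma zero_in_Delta: "(\<lambda>i. 0) \<in> Delta n k"
  unfolding Delta_def binvecs_def by auto

lemma binvecs_subset_Delta: "binvecs n \<subseteq> Delta n n"
proof
  fix y assume y: "y \<in> binvecs n"
  have "(\<Sum>i\<in>{1..n}. y i) \<le> (\<Sum>i\<in>{1..n}. 1)"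
    by (rule sum_mono) (use y in \<open>force simp: binvecs_def\<close>)
  then show "y \<in> Delta n n"
    using y unfolding Delta_def by simp
qed

lemma balanced_regret_obj_eq_Max_Min:
  "balanced_regret_obj n X c d \<Gamma> \<Gamma>' x =
     Max ((\<lambda>(\<delta>, y). Min ((\<lambda>\<epsilon>. scenario_regret n c d \<delta> \<epsilon> x y) ` Delta n \<Gamma>')) ` (Delta n \<Gamma> \<times> X))"
proof -
  have "{(\<Sum>i\<in>{1..n}. (c i + d i * \<delta> i + d i * \<epsilon> i) * (x i - y i)) | \<epsilon>. \<epsilon> \<in> Delta n \<Gamma>'} =
      (\<lambda>\<epsilon>. scenario_regret n c d \<delta> \<epsilon> x y) ` Delta n \<Gamma>'" for \<delta> y
    unfolding scenario_regret_def by blast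
  then show ?thesis
    unfolding balanced_regret_obj_def by (intro arg_cong[where f = Max]) force
qed

lemma scenario_regret_self: "scenario_regret n c d \<delta> \<epsilon> x x = 0"
  unfolding scenario_regret_def by simp

lemma scenario_regret_le_nominal_gap:
  assumes "x \<in> binvecs n" "y \<in> binvecs n" "\<delta> \<in> binvecs n" "\<forall>i\<in>{1..n}. d i \<ge> 0"
  shows "scenario_regret n c d \<delta> y x y \<le> nominal_obj n c d x - nominal_obj n c d y"
proof -
  have "scenario_regret n c d \<delta> y x y \<le> (\<Sum>i\<in>{1..n}. (c i + d i) * (x i - y i))"
    unfolding scenario_regret_def
  proof (rule sum_mono)
    fix i assume i: "i \<in> {1..n}"
    then have "x i \<in> {0, 1}" "y i \<in> {0, 1}" "\<delta> i \<in> {0, 1}" "d i \<ge> 0"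
      using assms unfolding binvecs_def by auto
    then show "(c i + d i * \<delta> i + d i * y i) * (x i - y i) \<le> (c i + d i) * (x i - y i)"
      by auto
  qed
  also have "\<dots> = nominal_obj n c d x - nominal_obj n c d y"
    unfolding nominal_obj_def by (simp add: algebra_simps sum_subtractf)
  finally show ?thesis .
qed

lemma balanced_regret_obj_nonneg:
  assumes "finite X" "x \<in> X"
  shows "0 \<le> balanced_regret_obj n X c d \<Gamma> \<Gamma>' x"
proof -
  have "Min ((\<lambda>\<epsilon>. scenario_regret n c d (\<lambda>i. 0) \<epsilon> x x) ` Delta n \<Gamma>') = 0"
    using zero_in_Delta[of n \<Gamma>'] by (auto simp: scenario_regret_self image_constant_conv)
  then show ?thesis
    unfolding balanced_regret_obj_eq_Max_Min
    using assms finite_Delta zero_in_Delta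
    by (intro Max_ge_iff[THEN iffD2]) force+
qed

lemma balanced_regret_obj_nonpos_at_nominal_optimum:
  assumes "finite X" "X \<subseteq> binvecs n" "x \<in> X" "\<forall>i\<in>{1..n}. d i \<ge> 0"
    and nominal_opt: "\<forall>y\<in>X. nominal_obj n c d x \<le> nominal_obj n c d y"
  shows "balanced_regret_obj n X c d \<Gamma> n x \<le> 0"
proof -
  have "Min ((\<lambda>\<epsilon>. scenario_regret n c d \<delta> \<epsilon> x y) ` Delta n n) \<le> 0"
    if \<delta>: "\<delta> \<in> Delta n \<Gamma>" and y: "y \<in> X" for \<delta> y
  proof -
    have "y \<in> Delta n n"
      using y assms(2) binvecs_subset_Delta by blast
    then have "Min ((\<lambda>\<epsilon>. scenario_regret n c d \<delta> \<epsilon> x y) ` Delta n n) \<le> scenario_regret n c d \<delta> y x y"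
      by (simp add: finite_Delta)
    also have "\<dots> \<le> nominal_obj n c d x - nominal_obj n c d y"
      using \<delta> y assms by (intro scenario_regret_le_nominal_gap) (auto simp: Delta_def)
    also have "\<dots> \<le> 0"
      using nominal_opt y by simp
    finally show ?thesis .
  qed
  then show ?thesis
    unfolding balanced_regret_obj_eq_Max_Min
    using assms(1,3) finite_Delta zero_in_Delta[of n \<Gamma>] by (subst Max_le_iff) auto
qed

theorem theorem1:
  fixes n :: nat and X :: "(nat \<Rightarrow> real) set" and c d :: "nat \<Rightarrow> real" and \<Gamma> :: nat
    and x :: "nat \<Rightarrow> real"
  assumes "X \<subseteq> binvecs n" and "X \<noteq> {}"
    and "\<forall>i\<in>{1..n}. c i \<ge> 0" and "\<forall>i\<in>{1..n}. d i \<ge> 0"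
    and "\<Gamma> \<le> n"
    and "is_optimal X (nominal_obj n c d) x"
  shows "is_optimal X (balanced_regret_obj n X c d \<Gamma> n) x"
proof -
  have "finite X"
    using assms(1) finite_binvecs finite_subset by blast
  moreover have "x \<in> X" and "\<forall>y\<in>X. nominal_obj n c d x \<le> nominal_obj n c d y"
    using assms(6) unfolding is_optimal_def by auto
  ultimately have "balanced_regret_obj n X c d \<Gamma> n x \<le> 0"
    using assms(1,4) by (intro balanced_regret_obj_nonpos_at_nominal_optimum)
  moreover have "\<forall>y\<in>X. 0 \<le> balanced_regret_obj n X c d \<Gamma> n y"
    using \<open>finite X\<close> balanced_regret_obj_nonneg by blast
  ultimately show ?thesis
    unfolding is_optimal_def using \<open>x \<in> X\<close> by (meson order_trans)
qed

end
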